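(* If $\Bbbk$ is an algebraically closed field of characteristic zero, then $\mathcal O(\lambda)\cong\mathcal O(1)$ for all $\lambda\in\Bbbk^*$. If $\Bbbk=\mathbb R$, then $\mathcal O(\lambda)\cong\mathcal O(1)$ for $\lambda>0$ and $\mathcal O(\lambda)\cong\mathcal O(-1)$ for $\lambda<0$, but $\mathcal O(-1)\not\cong\mathcal O(1)$.
   Context: $\mathcal W$ is the Witt algebra over $\Bbbk$ with basis $L_n$ ($n\in\mathbb{Z}$) and $[L_n,L_m]=(n-m)L_{n+m}$. For $\lambda\in\Bbbk^*$, $\mathcal O(\lambda)$ is the subalgebra of $\mathcal W$ spanned by $L_n-\lambda^nL_{-n}$, $n\ge1$; $\mathcal O=\mathcal O(1)$. *)

theory Defs
  imports "HOL-Computational_Algebra.Polynomial"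
begin

text \<open>The Witt algebra over a field 'k: elements are finitely supported functions
  int \<Rightarrow> 'k (coefficients w.r.t. the basis L_n).\<close>

definition witt :: "(int \<Rightarrow> 'k::field) set" where
  "witt = {f. finite {n. f n \<noteq> 0}}"

definition wL :: "int \<Rightarrow> int \<Rightarrow> 'k::field" where
  "wL n = (\<lambda>m. if m = n then 1 else 0)"

definition wadd :: "(int \<Rightarrow> 'k::field) \<Rightarrow> (int \<Rightarrow> 'k) \<Rightarrow> int \<Rightarrow> 'k" where
  "wadd f g = (\<lambda>m. f m + g m)"

definition wsmult :: "'k::field \<Rightarrow> (int \<Rightarrow> 'k) \<Rightarrow> int \<Rightarrow> 'k" where
  "wsmult c f = (\<lambda>m. c * f m)"

text \<open>Lie bracket, bilinear extension of [L_a, L_b] = (a - b) L_(a+b).\<close>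
definition wbr :: "(int \<Rightarrow> 'k::field) \<Rightarrow> (int \<Rightarrow> 'k) \<Rightarrow> int \<Rightarrow> 'k" where
  "wbr f g = (\<lambda>n. \<Sum>a\<in>{a. f a \<noteq> 0}. of_int (a - (n - a)) * f a * g (n - a))"

definition Osub :: "'k::field \<Rightarrow> (int \<Rightarrow> 'k) set" where
  "Osub lam = {(\<lambda>m. \<Sum>n\<in>S. c n * (wL (int n) m - lam ^ n * wL (- int n) m)) | S c.
                  finite S \<and> S \<subseteq> {1..}}"

definition lie_iso :: "(int \<Rightarrow> 'k::field) set \<Rightarrow> (int \<Rightarrow> 'k) set \<Rightarrow> bool" where
  "lie_iso A B \<longleftrightarrow> (\<exists>\<phi>. bij_betw \<phi> A B \<and>
      (\<forall>x\<in>A. \<forall>y\<in>A. \<phi> (wadd x y) = wadd (\<phi> x) (\<phi> y)) \<and>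
      (\<forall>c. \<forall>x\<in>A. \<phi> (wsmult c x) = wsmult c (\<phi> x)) \<and>
      (\<forall>x\<in>A. \<forall>y\<in>A. \<phi> (wbr x y) = wbr (\<phi> x) (\<phi> y)))"

definition alg_closed_field :: "'k::field itself \<Rightarrow> bool" where
  "alg_closed_field _ \<longleftrightarrow> (\<forall>p :: 'k poly. degree p \<ge> 1 \<longrightarrow> (\<exists>x. poly p x = 0))"

end

theory Submission
  imports Defs
begin

(* Rescaling L_n to t^n L_n is an automorphism of the Witt algebra that carries O(mu t^2) onto O(mu);
   this gives every isomorphism claimed, as lambda or -lambda has a square root in the fields concerned.
   To separate O(-1) from O(1) over the reals, O(-1) contains x, y, q, s with y nonzero and
   [x,[x,y]] + 64 y = [y,[x,q]] + [[x,y],[x,s]], a relation which any Lie isomorphism would transport.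
   The elements of the real O(1) are the odd functions f, and their moments
   mu_j(f) = sum_n f(n) n^j are the Taylor coefficients of F(z) = sum_n f(n) e^(nz), under which the
   bracket becomes F'G - FG'. All these F vanish at 0; if m is the vanishing order of Y, the m-th
   moment of [Y,[P,Q]] + [[X,Y],[R,S]] is 0, while that of [X,[X,Y]] + c Y is
   (((1 - m) mu_1(X))^2 + c) mu_m(Y), which is nonzero for c > 0. *)

definition supp :: "(int \<Rightarrow> 'k::zero) \<Rightarrow> int set" where
  "supp f = {n. f n \<noteq> 0}"

definition Obasis :: "'k::field \<Rightarrow> nat \<Rightarrow> int \<Rightarrow> 'k" where
  "Obasis lam n = (\<lambda>m. wL (int n) m - lam ^ n * wL (- int n) m)"

lemma Obasis_apply:
  "n \<ge> 1 \<Longrightarrow> Obasis lam n m = (if m = int n then 1 else if m = - int n then - (lam ^ n) else 0)"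
  by (auto simp: Obasis_def wL_def)

lemma Osub_eq_span:
  "Osub lam = {(\<lambda>m. \<Sum>n\<in>S. c n * Obasis lam n m) | S c. finite S \<and> S \<subseteq> {1..}}"
  by (simp add: Osub_def Obasis_def)

lemma Osub_memD:
  assumes "f \<in> Osub lam"
  shows "finite (supp f)" "f 0 = 0" "\<And>k. k \<ge> 1 \<Longrightarrow> f (- int k) = - (lam ^ k) * f (int k)"
proof -
  obtain S c where f: "f = (\<lambda>m. \<Sum>n\<in>S. c n * Obasis lam n m)" and S: "finite S" "S \<subseteq> {1..}"
    using assms unfolding Osub_eq_span by blast
  have f_apply: "f m = (\<Sum>n\<in>S. if m = int n then c n else if m = - int n then - (lam ^ n) * c n else 0)"
    for m unfolding f using S by (intro sum.cong) (auto simp: Obasis_apply)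
  have "f m = 0" if "m \<notin> int ` S \<union> uminus ` int ` S" for m
    using that by (auto simp: f_apply intro!: sum.neutral)
  then have "supp f \<subseteq> int ` S \<union> uminus ` int ` S"
    by (auto simp: supp_def)
  then show "finite (supp f)"
    by (rule finite_subset) (use S(1) in auto)
  show "f 0 = 0"
    using S(2) by (auto simp: f_apply intro!: sum.neutral)
  have f_pos: "f (int k) = (if k \<in> S then c k else 0)" if "k \<ge> 1" for k
  proof -
    have "f (int k) = (\<Sum>n\<in>S. if n = k then c n else 0)"
      unfolding f_apply using S(2) that by (intro sum.cong) auto
    then show ?thesis
      using S(1) by (simp add: sum.delta')
  qed
  fix k :: nat assume "k \<ge> 1"
  have "f (- int k) = (\<Sum>n\<in>S. if n = k then - (lam ^ k) * c n else 0)"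
    unfolding f_apply using S(2) \<open>k \<ge> 1\<close> by (intro sum.cong) auto
  then show "f (- int k) = - (lam ^ k) * f (int k)"
    using S(1) \<open>k \<ge> 1\<close> by (simp add: f_pos sum.delta')
qed

lemma Osub_memI:
  assumes fin: "finite (supp f)" and f0: "f 0 = 0"
    and reflect: "\<And>k. k \<ge> 1 \<Longrightarrow> f (- int k) = - (lam ^ k) * f (int k)"
  shows "f \<in> Osub lam"
proof -
  define S where "S = {k. k \<ge> 1 \<and> f (int k) \<noteq> 0}"
  have "S \<subseteq> int -` supp f"
    by (auto simp: S_def supp_def)
  moreover have "finite (int -` supp f)"
    using fin by (rule finite_vimageI) (simp add: inj_def)
  ultimately have finS: "finite S"
    by (rule finite_subset)
  have "f = (\<lambda>m. \<Sum>n\<in>S. f (int n) * Obasis lam n m)"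
  proof
    fix m
    have "(\<Sum>n\<in>S. f (int n) * Obasis lam n m) = (\<Sum>n\<in>S. if n = nat \<bar>m\<bar> then f m else 0)"
      using reflect by (intro sum.cong) (auto simp: S_def Obasis_apply)
    also have "\<dots> = f m"
      using finS f0 reflect[of "nat \<bar>m\<bar>"]
      by (cases m rule: linorder_cases[of _ 0]) (auto simp: S_def sum.delta')
    finally show "f m = (\<Sum>n\<in>S. f (int n) * Obasis lam n m)" ..
  qed
  moreover have "S \<subseteq> {1..}"
    by (auto simp: S_def)
  ultimately show ?thesis
    unfolding Osub_eq_span using finS
    by (intro CollectI exI[of _ S] exI[of _ "\<lambda>n. f (int n)"]) auto
qed

lemma Osub_reflect:
  assumes "f \<in> Osub lam" and "lam \<noteq> 0"
  shows "f (- n) = - (lam powi n) * f n"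
proof (cases "n \<ge> 0")
  case True
  then show ?thesis
    using Osub_memD(2)[OF assms(1)] Osub_memD(3)[OF assms(1), of "nat n"]
    by (cases "n = 0") (auto simp: power_int_def)
next
  case False
  then show ?thesis
    using Osub_memD(3)[OF assms(1), of "nat (- n)"] assms(2)
    by (simp add: power_int_def power_mult_distrib[symmetric])
qed

definition wscale :: "'k::field \<Rightarrow> (int \<Rightarrow> 'k) \<Rightarrow> int \<Rightarrow> 'k" where
  "wscale t f = (\<lambda>n. t powi n * f n)"

lemma wscale_wadd: "wscale t (wadd f g) = wadd (wscale t f) (wscale t g)"
  by (simp add: wscale_def wadd_def distrib_left)

lemma wscale_wsmult: "wscale t (wsmult c f) = wsmult c (wscale t f)"
  by (simp add: wscale_def wsmult_def ac_simps)

lemma wscale_wbr: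
  assumes "t \<noteq> 0"
  shows "wscale t (wbr f g) = wbr (wscale t f) (wscale t g)"
proof
  fix n
  have split: "t powi n = t powi a * t powi (n - a)" for a
    using power_int_add[of t a "n - a"] assms by simp
  have "wscale t (wbr f g) n
      = (\<Sum>a\<in>{a. f a \<noteq> 0}. of_int (a - (n - a)) * (t powi a * f a) * (t powi (n - a) * g (n - a)))"
    unfolding wscale_def wbr_def sum_distrib_left
  proof (intro sum.cong refl)
    fix a
    show "t powi n * (of_int (a - (n - a)) * f a * g (n - a))
        = of_int (a - (n - a)) * (t powi a * f a) * (t powi (n - a) * g (n - a))"
      by (subst split[of a]) (simp add: ac_simps)
  qed
  also have "{a. f a \<noteq> 0} = {a. wscale t f a \<noteq> 0}"
    using assms by (simp add: wscale_def)
  finally show "wscale t (wbr f g) n = wbr (wscale t f) (wscale t g) n"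
    by (simp add: wbr_def wscale_def)
qed

lemma wscale_inverse: "t \<noteq> 0 \<Longrightarrow> wscale (inverse t) (wscale t f) = f"
  by (simp add: wscale_def power_int_inverse mult.assoc[symmetric])

lemma wscale_mem_Osub:
  assumes t: "t \<noteq> 0" and f: "f \<in> Osub (mu * t\<^sup>2)"
  shows "wscale t f \<in> Osub mu"
proof (rule Osub_memI)
  show "finite (supp (wscale t f))"
    using Osub_memD(1)[OF f] t by (simp add: supp_def wscale_def)
  show "wscale t f 0 = 0"
    using Osub_memD(2)[OF f] by (simp add: wscale_def)
  fix k :: nat assume "k \<ge> 1"
  then have "f (- int k) = - ((mu ^ k) * (t ^ k * t ^ k)) * f (int k)"
    using Osub_memD(3)[OF f] by (simp add: power_mult_distrib power2_eq_square)
  then show "wscale t f (- int k) = - (mu ^ k) * wscale t f (int k)"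
    using t by (simp add: wscale_def power_int_minus field_simps)
qed

lemma lie_iso_Osub_scale:
  assumes t: "t \<noteq> 0"
  shows "lie_iso (Osub (mu * t\<^sup>2)) (Osub mu)"
  unfolding lie_iso_def
proof (intro exI[of _ "wscale t"] conjI ballI allI)
  have unscale: "mu * t\<^sup>2 * (inverse t)\<^sup>2 = mu"
    using t by (simp add: mult.assoc power_mult_distrib[symmetric])
  have "wscale (inverse t) g \<in> Osub (mu * t\<^sup>2)" if "g \<in> Osub mu" for g
    using wscale_mem_Osub[of "inverse t" g "mu * t\<^sup>2", unfolded unscale] that t by simp
  then show "bij_betw (wscale t) (Osub (mu * t\<^sup>2)) (Osub mu)"
    using t wscale_mem_Osub[OF t] wscale_inverse[OF t] wscale_inverse[of "inverse t"]
    by (intro bij_betw_byWitness[where f' = "wscale (inverse t)"]) auto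
qed (simp_all add: wscale_wadd wscale_wsmult wscale_wbr t)

lemma alg_closed_field_sqrt:
  assumes "alg_closed_field TYPE('k::field)"
  shows "\<exists>t::'k. t\<^sup>2 = a"
proof -
  have "degree [:- a, 0, 1:] \<ge> 1"
    by simp
  then obtain t :: 'k where "poly [:- a, 0, 1:] t = 0"
    using assms unfolding alg_closed_field_def by blast
  then show ?thesis
    by (auto simp: power2_eq_square algebra_simps)
qed

lemma wbr_eq_sum:
  assumes "finite S" "supp f \<subseteq> S"
  shows "wbr f g n = (\<Sum>a\<in>S. of_int (a - (n - a)) * f a * g (n - a))"
  unfolding wbr_def by (rule sum.mono_neutral_left) (use assms in \<open>auto simp: supp_def\<close>)

lemma supp_wbr: "supp (wbr f g) \<subseteq> (\<lambda>(a, b). a + b) ` (supp f \<times> supp g)"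
proof
  fix n assume "n \<in> supp (wbr f g)"
  then obtain a where "f a \<noteq> 0" "of_int (a - (n - a)) * f a * g (n - a) \<noteq> 0"
    unfolding supp_def wbr_def by (metis (mono_tags, lifting) mem_Collect_eq sum.neutral)
  then have "(a, n - a) \<in> supp f \<times> supp g"
    by (simp add: supp_def)
  then show "n \<in> (\<lambda>(a, b). a + b) ` (supp f \<times> supp g)"
    by (force intro: image_eqI)
qed

lemma finite_supp_wbr: "finite (supp f) \<Longrightarrow> finite (supp g) \<Longrightarrow> finite (supp (wbr f g))"
  by (rule finite_subset[OF supp_wbr]) auto

lemma finite_supp_wadd: "finite (supp f) \<Longrightarrow> finite (supp g) \<Longrightarrow> finite (supp (wadd f g))"
  by (rule finite_subset[of _ "supp f \<union> supp g"]) (auto simp: supp_def wadd_def)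

lemma finite_supp_wsmult: "finite (supp f) \<Longrightarrow> finite (supp (wsmult c f))"
  by (rule finite_subset[of _ "supp f"]) (auto simp: supp_def wsmult_def)

definition lie_subalgebra :: "(int \<Rightarrow> 'k::field) set \<Rightarrow> bool" where
  "lie_subalgebra A \<longleftrightarrow> (\<forall>x\<in>A. \<forall>y\<in>A. wadd x y \<in> A) \<and> (\<forall>c. \<forall>x\<in>A. wsmult c x \<in> A)
     \<and> (\<forall>x\<in>A. \<forall>y\<in>A. wbr x y \<in> A)"

lemma wbr_mem_Osub:
  fixes lam :: "'k::field_char_0"
  assumes lam: "lam \<noteq> 0" and f: "f \<in> Osub lam" and g: "g \<in> Osub lam"
  shows "wbr f g \<in> Osub lam"
proof -
  define S where "S = supp f \<union> uminus ` supp f"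
  have S: "finite S" "supp f \<subseteq> S" "uminus ` S = S"
    using Osub_memD(1)[OF f] by (auto simp: S_def image_Un image_image)
  have split: "lam powi n = lam powi a * lam powi (n - a)" for n a
    using power_int_add[of lam a "n - a"] lam by simp
  have reflect: "wbr f g (- n) = - (lam powi n) * wbr f g n" for n
  proof -
    have "wbr f g (- n) = (\<Sum>a\<in>uminus ` S. of_int (a - (- n - a)) * f a * g (- n - a))"
      unfolding S(3) by (rule wbr_eq_sum[OF S(1,2)])
    also have "\<dots> = (\<Sum>a\<in>S. of_int (- a - (- n + a)) * f (- a) * g (- (n - a)))"
      by (simp add: sum.reindex inj_on_def)
    also have "\<dots> = (\<Sum>a\<in>S. - (lam powi n) * (of_int (a - (n - a)) * f a * g (n - a)))"
    proof (intro sum.cong refl)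
      fix a
      have "f (- a) = - (lam powi a) * f a" "g (- (n - a)) = - (lam powi (n - a)) * g (n - a)"
        using Osub_reflect[OF f lam] Osub_reflect[OF g lam] by blast+
      then show "of_int (- a - (- n + a)) * f (- a) * g (- (n - a))
          = - (lam powi n) * (of_int (a - (n - a)) * f a * g (n - a))"
        using split[of n a] by (simp add: algebra_simps)
    qed
    also have "\<dots> = - (lam powi n) * wbr f g n"
      by (simp add: wbr_eq_sum[OF S(1,2)] sum_distrib_left)
    finally show ?thesis .
  qed
  show ?thesis
  proof (rule Osub_memI)
    show "finite (supp (wbr f g))"
      using Osub_memD(1)[OF f] Osub_memD(1)[OF g] by (rule finite_supp_wbr)
    show "wbr f g 0 = 0"
      using reflect[of 0] by simp
    show "wbr f g (- int k) = - (lam ^ k) * wbr f g (int k)" for k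
      using reflect[of "int k"] by simp
  qed
qed

lemma lie_subalgebra_Osub:
  fixes lam :: "'k::field_char_0"
  assumes "lam \<noteq> 0"
  shows "lie_subalgebra (Osub lam)"
  unfolding lie_subalgebra_def
proof (intro conjI ballI allI)
  fix x y c assume x: "x \<in> Osub lam" and y: "y \<in> Osub lam"
  show "wadd x y \<in> Osub lam"
    using Osub_memD[OF x] Osub_memD[OF y]
    by (intro Osub_memI finite_supp_wadd) (simp_all add: wadd_def algebra_simps)
  show "wsmult c x \<in> Osub lam"
    using Osub_memD[OF x] by (intro Osub_memI finite_supp_wsmult) (simp_all add: wsmult_def)
  show "wbr x y \<in> Osub lam"
    using assms x y by (rule wbr_mem_Osub)
qed

definition ad_sq_relation :: "'k::field \<Rightarrow> (int \<Rightarrow> 'k) set \<Rightarrow> bool" where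
  "ad_sq_relation c A \<longleftrightarrow> (\<exists>X\<in>A. \<exists>Y\<in>A. \<exists>P\<in>A. \<exists>Q\<in>A. \<exists>R\<in>A. \<exists>S\<in>A. Y \<noteq> (\<lambda>n. 0) \<and>
     wadd (wbr X (wbr X Y)) (wsmult c Y) = wadd (wbr Y (wbr P Q)) (wbr (wbr X Y) (wbr R S)))"

lemma ad_sq_relation_lie_iso:
  assumes A: "lie_subalgebra A" and iso: "lie_iso A B" and rel: "ad_sq_relation c A"
  shows "ad_sq_relation c B"
proof -
  obtain \<phi> where bij: "bij_betw \<phi> A B"
    and add: "\<And>u v. u \<in> A \<Longrightarrow> v \<in> A \<Longrightarrow> \<phi> (wadd u v) = wadd (\<phi> u) (\<phi> v)"
    and smult: "\<And>c u. u \<in> A \<Longrightarrow> \<phi> (wsmult c u) = wsmult c (\<phi> u)"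
    and br: "\<And>u v. u \<in> A \<Longrightarrow> v \<in> A \<Longrightarrow> \<phi> (wbr u v) = wbr (\<phi> u) (\<phi> v)"
    using iso unfolding lie_iso_def by blast
  have closed: "\<And>u v. u \<in> A \<Longrightarrow> v \<in> A \<Longrightarrow> wbr u v \<in> A" "\<And>c u. u \<in> A \<Longrightarrow> wsmult c u \<in> A"
    using A unfolding lie_subalgebra_def by blast+
  obtain X Y P Q R S where mem: "X \<in> A" "Y \<in> A" "P \<in> A" "Q \<in> A" "R \<in> A" "S \<in> A"
    and Y: "Y \<noteq> (\<lambda>n. 0)"
    and eq: "wadd (wbr X (wbr X Y)) (wsmult c Y) = wadd (wbr Y (wbr P Q)) (wbr (wbr X Y) (wbr R S))"
    using rel unfolding ad_sq_relation_def by blast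
  have zero: "wsmult 0 u = (\<lambda>n. 0)" for u :: "int \<Rightarrow> 'a"
    by (simp add: wsmult_def)
  have "\<phi> Y \<noteq> \<phi> (wsmult 0 Y)"
    using Y zero bij_betw_imp_inj_on[OF bij] closed(2)[OF mem(2)] mem(2) by (metis inj_onD)
  then have "\<phi> Y \<noteq> (\<lambda>n. 0)"
    using smult[OF mem(2), of 0] zero by metis
  moreover have "wadd (wbr (\<phi> X) (wbr (\<phi> X) (\<phi> Y))) (wsmult c (\<phi> Y))
      = wadd (wbr (\<phi> Y) (wbr (\<phi> P) (\<phi> Q))) (wbr (wbr (\<phi> X) (\<phi> Y)) (wbr (\<phi> R) (\<phi> S)))"
    using arg_cong[of _ _ \<phi>, OF eq] mem by (simp add: add smult br closed)
  moreover have "\<phi> ` A = B"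
    using bij by (simp add: bij_betw_def)
  ultimately show ?thesis
    unfolding ad_sq_relation_def using mem by blast
qed

definition moment :: "nat \<Rightarrow> (int \<Rightarrow> 'k::field) \<Rightarrow> 'k" where
  "moment j f = (\<Sum>n\<in>supp f. f n * of_int n ^ j)"

lemma moment_eq_sum:
  "finite S \<Longrightarrow> supp f \<subseteq> S \<Longrightarrow> moment j f = (\<Sum>n\<in>S. f n * of_int n ^ j)"
  unfolding moment_def by (rule sum.mono_neutral_left) (auto simp: supp_def)

lemma moment_wadd:
  assumes "finite (supp f)" "finite (supp g)"
  shows "moment j (wadd f g) = moment j f + moment j g"
proof -
  let ?S = "supp f \<union> supp g"
  have "supp (wadd f g) \<subseteq> ?S"
    by (auto simp: supp_def wadd_def)
  then show ?thesis
    using assms moment_eq_sum[of ?S f j] moment_eq_sum[of ?S g j] moment_eq_sum[of ?S "wadd f g" j]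
    by (simp add: wadd_def distrib_right sum.distrib)
qed

lemma moment_wsmult:
  assumes "finite (supp f)"
  shows "moment j (wsmult c f) = c * moment j f"
proof -
  have "supp (wsmult c f) \<subseteq> supp f"
    by (auto simp: supp_def wsmult_def)
  then show ?thesis
    using assms moment_eq_sum[of "supp f" "wsmult c f" j]
    by (simp add: moment_def wsmult_def sum_distrib_left ac_simps)
qed

lemma moment_wbr_double_sum:
  assumes ff: "finite (supp f)" and fg: "finite (supp g)"
  shows "moment j (wbr f g) = (\<Sum>a\<in>supp f. \<Sum>b\<in>supp g. of_int (a - b) * f a * g b * of_int (a + b) ^ j)"
proof -
  define T where "T = (\<lambda>(a, b). a + b) ` (supp f \<times> supp g)"
  have fT: "finite T"
    unfolding T_def using ff fg by auto
  have inner: "(\<Sum>n\<in>T. of_int (a - (n - a)) * f a * g (n - a) * of_int n ^ j)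
      = (\<Sum>b\<in>supp g. of_int (a - b) * f a * g b * of_int (a + b) ^ j)" if a: "a \<in> supp f" for a
  proof -
    have "(\<Sum>n\<in>T. of_int (a - (n - a)) * f a * g (n - a) * of_int n ^ j)
        = (\<Sum>n\<in>(+) a ` supp g. of_int (a - (n - a)) * f a * g (n - a) * of_int n ^ j)"
    proof (rule sum.mono_neutral_right[OF fT])
      show "(+) a ` supp g \<subseteq> T"
        using a by (force simp: T_def)
      show "\<forall>n\<in>T - (+) a ` supp g. of_int (a - (n - a)) * f a * g (n - a) * of_int n ^ j = 0"
        by (force simp: supp_def)
    qed
    also have "\<dots> = (\<Sum>b\<in>supp g. of_int (a - b) * f a * g b * of_int (a + b) ^ j)"
      by (simp add: sum.reindex)
    finally show ?thesis .
  qed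
  have "moment j (wbr f g) = (\<Sum>n\<in>T. wbr f g n * of_int n ^ j)"
    by (rule moment_eq_sum[OF fT]) (simp add: T_def supp_wbr)
  also have "\<dots> = (\<Sum>a\<in>supp f. \<Sum>n\<in>T. of_int (a - (n - a)) * f a * g (n - a) * of_int n ^ j)"
    by (simp add: wbr_def supp_def sum_distrib_right sum.swap[of _ T])
  also have "\<dots> = (\<Sum>a\<in>supp f. \<Sum>b\<in>supp g. of_int (a - b) * f a * g b * of_int (a + b) ^ j)"
    by (rule sum.cong[OF refl inner])
  finally show ?thesis .
qed

lemma moment_wbr:
  assumes ff: "finite (supp f)" and fg: "finite (supp g)"
  shows "moment j (wbr f g) = (\<Sum>k\<le>j. of_nat (j choose k) *
    (moment (Suc k) f * moment (j - k) g - moment k f * moment (Suc (j - k)) g))"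
proof -
  have binomial: "(x - y) * (x + y) ^ j
      = (\<Sum>k\<le>j. of_nat (j choose k) * (x ^ Suc k * y ^ (j - k) - x ^ k * y ^ Suc (j - k)))" for x y :: 'a
    by (simp add: binomial_ring sum_distrib_left algebra_simps)
  have "moment j (wbr f g) = (\<Sum>a\<in>supp f. \<Sum>b\<in>supp g. \<Sum>k\<le>j. of_nat (j choose k) *
      ((f a * of_int a ^ Suc k) * (g b * of_int b ^ (j - k))
       - (f a * of_int a ^ k) * (g b * of_int b ^ Suc (j - k))))"
    unfolding moment_wbr_double_sum[OF ff fg]
  proof (intro sum.cong refl)
    fix a b
    have "of_int (a - b) * f a * g b * of_int (a + b) ^ j
        = f a * g b * ((of_int a - of_int b) * (of_int a + of_int b) ^ j)"
      by (simp add: algebra_simps)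
    then show "of_int (a - b) * f a * g b * of_int (a + b) ^ j = (\<Sum>k\<le>j. of_nat (j choose k) *
        ((f a * of_int a ^ Suc k) * (g b * of_int b ^ (j - k))
         - (f a * of_int a ^ k) * (g b * of_int b ^ Suc (j - k))))"
      by (simp only: binomial) (simp add: sum_distrib_left algebra_simps)
  qed
  also have "\<dots> = (\<Sum>k\<le>j. \<Sum>a\<in>supp f. \<Sum>b\<in>supp g. of_nat (j choose k) *
      ((f a * of_int a ^ Suc k) * (g b * of_int b ^ (j - k))
       - (f a * of_int a ^ k) * (g b * of_int b ^ Suc (j - k))))"
    by (subst sum.swap, rule sum.cong[OF refl], rule sum.swap)
  also have "\<dots> = (\<Sum>k\<le>j. of_nat (j choose k) *
      (moment (Suc k) f * moment (j - k) g - moment k f * moment (Suc (j - k)) g))"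
    unfolding moment_def sum_product
    by (intro sum.cong refl) (simp only: sum_distrib_left right_diff_distrib sum_subtractf)
  finally show ?thesis .
qed

lemma moment_wbr_below:
  assumes "finite (supp X)" "finite (supp Y)" "moment 0 X = 0" "\<forall>i<m. moment i Y = 0" "i < m"
  shows "moment i (wbr X Y) = 0"
proof -
  have "of_nat (i choose k) * (moment (Suc k) X * moment (i - k) Y - moment k X * moment (Suc (i - k)) Y) = 0"
    if "k \<le> i" for k
    using assms that by (cases k) auto
  then show ?thesis
    using assms(1,2) by (simp add: moment_wbr del: mult_eq_0_iff)
qed

lemma moment_wbr_lowest:
  assumes "finite (supp X)" "finite (supp Y)" "moment 0 X = 0" "\<forall>i<m. moment i Y = 0" "m \<ge> 1"
  shows "moment m (wbr X Y) = (1 - of_nat m) * moment 1 X * moment m Y"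
proof -
  have summand: "of_nat (m choose k) * (moment (Suc k) X * moment (m - k) Y - moment k X * moment (Suc (m - k)) Y)
      = (if k = 0 then moment 1 X * moment m Y else 0)
        - (if k = 1 then of_nat m * moment 1 X * moment m Y else 0)" if "k \<le> m" for k
  proof -
    consider "k = 0" | "k = 1" | "k \<ge> 2" by linarith
    then show ?thesis
      using assms that by cases (auto simp: Suc_diff_Suc)
  qed
  have "moment m (wbr X Y) = moment 1 X * moment m Y - of_nat m * moment 1 X * moment m Y"
    using assms(1,2,5) by (simp add: moment_wbr summand sum_subtractf sum.delta)
  then show ?thesis
    by (simp add: algebra_simps)
qed

lemma moment_wbr_0_1:
  assumes "finite (supp P)" "finite (supp Q)" "moment 0 P = 0" "moment 0 Q = 0"
  shows "moment 0 (wbr P Q) = 0" "moment 1 (wbr P Q) = 0"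
  using assms by (simp_all add: moment_wbr numeral_2_eq_2)

lemma moment_wbr_above:
  assumes "finite (supp V)" "finite (supp W)" "\<forall>i<m. moment i V = 0"
    and "moment 0 W = 0" "moment 1 W = 0"
  shows "moment m (wbr V W) = 0"
proof -
  have "moment (Suc k) V * moment (m - k) W = 0" if "k \<le> m" for k
  proof (cases "Suc k < m")
    case False
    then have "m - k = 0 \<or> m - k = 1"
      by linarith
    then show ?thesis
      using assms(4,5) by auto
  qed (use assms(3) in simp)
  moreover have "moment k V * moment (Suc (m - k)) W = 0" if "k \<le> m" for k
    using assms(3,5) that by (cases "k < m") auto
  ultimately show ?thesis
    using assms(1,2) by (simp add: moment_wbr del: mult_eq_0_iff)
qed

lemma vanishing_moments_imp_zero:
  fixes Y :: "int \<Rightarrow> 'k::field_char_0"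
  assumes "finite S" "\<And>j. (\<Sum>n\<in>S. Y n * of_int n ^ j) = 0" "n \<in> S"
  shows "Y n = 0"
  using assms
proof (induction S arbitrary: Y n rule: finite_induct)
  case empty
  then show ?case by simp
next
  case (insert s F)
  \<comment> \<open>Vandermonde: the factor \<open>n - s\<close> kills the point \<open>s\<close> and keeps all moments zero.\<close>
  define Y' where "Y' n = Y n * (of_int n - of_int s)" for n
  have "(\<Sum>n\<in>insert s F. Y' n * of_int n ^ j)
      = (\<Sum>n\<in>insert s F. Y n * of_int n ^ Suc j) - of_int s * (\<Sum>n\<in>insert s F. Y n * of_int n ^ j)" for j
    unfolding Y'_def by (simp add: sum_distrib_left sum_subtractf[symmetric] algebra_simps)
  then have "(\<Sum>n\<in>insert s F. Y' n * of_int n ^ j) = 0" for j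
    using insert.prems(1)[of j] insert.prems(1)[of "Suc j"] by simp
  then have "(\<Sum>n\<in>F. Y' n * of_int n ^ j) = 0" for j
    using insert.hyps by (simp add: Y'_def)
  then have F: "Y n = 0" if "n \<in> F" for n
    using insert.IH[of Y' n] insert.hyps that by (auto simp: Y'_def)
  then have "Y s = 0"
    using insert.prems(1)[of 0] insert.hyps by simp
  then show ?case
    using F insert.prems(2) by auto
qed

lemma ex_moment_nonzero:
  fixes Y :: "int \<Rightarrow> 'k::field_char_0"
  assumes "finite (supp Y)" "Y \<noteq> (\<lambda>n. 0)"
  shows "\<exists>j. moment j Y \<noteq> 0"
proof (rule ccontr)
  assume "\<nexists>j. moment j Y \<noteq> 0"
  then have "Y n = 0" if "n \<in> supp Y" for n
    using vanishing_moments_imp_zero[OF assms(1)] that unfolding moment_def by blast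
  then show False
    using assms(2) by (auto simp: supp_def)
qed

lemma moment_0_odd:
  fixes f :: "int \<Rightarrow> 'k::field_char_0"
  assumes "\<And>n. f (- n) = - f n"
  shows "moment 0 f = 0"
proof -
  have "- n \<in> supp f \<longleftrightarrow> n \<in> supp f" for n
    using assms by (simp add: supp_def)
  then have "moment 0 f = (\<Sum>n\<in>supp f. f (- n))"
    unfolding moment_def by (intro sum.reindex_bij_witness[of _ uminus uminus]) auto
  then show ?thesis
    using assms by (simp add: moment_def sum_negf)
qed

lemma moment_ad_sq_lhs:
  assumes "finite (supp X)" "finite (supp Y)" "moment 0 X = 0" "\<forall>i<m. moment i Y = 0" "m \<ge> 1"
  shows "moment m (wadd (wbr X (wbr X Y)) (wsmult c Y))
    = (((1 - of_nat m) * moment 1 X)\<^sup>2 + c) * moment m Y"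
proof -
  have XY: "finite (supp (wbr X Y))" "\<forall>i<m. moment i (wbr X Y) = 0"
    using assms moment_wbr_below[OF assms(1-4)] finite_supp_wbr by blast+
  show ?thesis
    using assms XY
    by (simp add: moment_wadd finite_supp_wbr finite_supp_wsmult moment_wsmult moment_wbr_lowest
        power2_eq_square algebra_simps)
qed

lemma moment_ad_sq_rhs:
  assumes "finite (supp X)" "finite (supp Y)" "finite (supp P)" "finite (supp Q)"
    "finite (supp R)" "finite (supp S)"
    and "moment 0 X = 0" "moment 0 P = 0" "moment 0 Q = 0" "moment 0 R = 0" "moment 0 S = 0"
    and "\<forall>i<m. moment i Y = 0"
  shows "moment m (wadd (wbr Y (wbr P Q)) (wbr (wbr X Y) (wbr R S))) = 0"
proof -
  have XY: "\<forall>i<m. moment i (wbr X Y) = 0"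
    using moment_wbr_below[OF assms(1,2,7,12)] by blast
  have "moment m (wbr (wbr X Y) (wbr R S)) = 0"
    using finite_supp_wbr[OF assms(1,2)] finite_supp_wbr[OF assms(5,6)] XY
      moment_wbr_0_1[OF assms(5,6,10,11)]
    by (rule moment_wbr_above)
  moreover have "moment m (wbr Y (wbr P Q)) = 0"
    using assms(2) finite_supp_wbr[OF assms(3,4)] assms(12) moment_wbr_0_1[OF assms(3,4,8,9)]
    by (rule moment_wbr_above)
  ultimately show ?thesis
    using assms by (simp add: moment_wadd finite_supp_wbr)
qed

lemma not_ad_sq_relation_Osub_one:
  fixes c :: "'k::linordered_field"
  assumes "c > 0"
  shows "\<not> ad_sq_relation c (Osub 1)"
proof
  assume "ad_sq_relation c (Osub 1)"
  then obtain X Y P Q R S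
    where mem: "X \<in> Osub 1" "Y \<in> Osub 1" "P \<in> Osub 1" "Q \<in> Osub 1" "R \<in> Osub 1" "S \<in> Osub 1"
    and Y: "Y \<noteq> (\<lambda>n. 0)"
    and eq: "wadd (wbr X (wbr X Y)) (wsmult c Y) = wadd (wbr Y (wbr P Q)) (wbr (wbr X Y) (wbr R S))"
    unfolding ad_sq_relation_def by blast
  have fin: "finite (supp Z)" and mom0: "moment 0 Z = 0" if "Z \<in> Osub (1::'k)" for Z
    using Osub_memD(1)[OF that] moment_0_odd[of Z] Osub_reflect[OF that] by simp_all
  obtain j where "moment j Y \<noteq> 0"
    using ex_moment_nonzero[OF fin[OF mem(2)] Y] by blast
  define m where "m = (LEAST j. moment j Y \<noteq> 0)"
  have mY: "moment m Y \<noteq> 0"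
    unfolding m_def by (rule LeastI) fact
  have below: "\<forall>i<m. moment i Y = 0"
    unfolding m_def using not_less_Least by blast
  have "m \<ge> 1"
    using mY mom0[OF mem(2)] by (cases m) auto
  then have "(((1 - of_nat m) * moment 1 X)\<^sup>2 + c) * moment m Y = 0"
    using arg_cong[of _ _ "moment m", OF eq] mem below fin mom0
    by (simp add: moment_ad_sq_lhs moment_ad_sq_rhs)
  moreover have "((1 - of_nat m) * moment 1 X)\<^sup>2 + c > 0"
    using assms by (simp add: add_nonneg_pos)
  ultimately show False
    using mY by simp
qed

definition witt_of_list :: "(int \<times> 'k::field) list \<Rightarrow> int \<Rightarrow> 'k" where
  "witt_of_list xs = (\<lambda>m. sum_list (map (\<lambda>(k, c). if k = m then c else 0) xs))"

definition bracket_list :: "(int \<times> 'k::field) list \<Rightarrow> (int \<times> 'k) list \<Rightarrow> (int \<times> 'k) list" where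
  "bracket_list xs ys = concat (map (\<lambda>(k, c). map (\<lambda>(l, d). (k + l, of_int (k - l) * c * d)) ys) xs)"

lemma witt_of_list_Nil [simp]: "witt_of_list [] m = 0"
  by (simp add: witt_of_list_def)

lemma witt_of_list_Cons [simp]:
  "witt_of_list ((k, c) # xs) m = (if k = m then c else 0) + witt_of_list xs m"
  by (simp add: witt_of_list_def)

lemma witt_of_list_append [simp]: "witt_of_list (xs @ ys) m = witt_of_list xs m + witt_of_list ys m"
  by (simp add: witt_of_list_def)

lemma supp_witt_of_list: "supp (witt_of_list xs) \<subseteq> fst ` set xs"
  by (induction xs) (auto simp: supp_def)

lemma witt_of_list_eqI:
  assumes "\<forall>k \<in> fst ` set (xs @ ys). witt_of_list xs k = witt_of_list ys k"
  shows "witt_of_list xs = witt_of_list ys"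
proof
  fix k
  show "witt_of_list xs k = witt_of_list ys k"
  proof (cases "k \<in> fst ` set (xs @ ys)")
    case False
    then have "k \<notin> supp (witt_of_list xs)" "k \<notin> supp (witt_of_list ys)"
      using supp_witt_of_list[of xs] supp_witt_of_list[of ys] by auto
    then show ?thesis
      by (simp add: supp_def)
  qed (use assms in blast)
qed

lemma wadd_witt_of_list: "wadd (witt_of_list xs) (witt_of_list ys) = witt_of_list (xs @ ys)"
  by (simp add: wadd_def fun_eq_iff)

lemma wsmult_witt_of_list: "wsmult c (witt_of_list xs) = witt_of_list (map (\<lambda>(k, d). (k, c * d)) xs)"
proof
  fix m
  show "wsmult c (witt_of_list xs) m = witt_of_list (map (\<lambda>(k, d). (k, c * d)) xs) m"
    by (induction xs) (auto simp: wsmult_def algebra_simps)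
qed

lemma sum_witt_of_list:
  assumes "finite S" "fst ` set xs \<subseteq> S"
  shows "(\<Sum>a\<in>S. witt_of_list xs a * h a) = sum_list (map (\<lambda>(k, c). c * h k) xs)"
  using assms(2)
proof (induction xs)
  case (Cons x xs)
  obtain k c where x: "x = (k, c)"
    by fastforce
  have "(\<Sum>a\<in>S. witt_of_list (x # xs) a * h a)
      = (\<Sum>a\<in>S. if k = a then c * h a else 0) + (\<Sum>a\<in>S. witt_of_list xs a * h a)"
    by (subst sum.distrib[symmetric], rule sum.cong) (auto simp: x distrib_right)
  then show ?case
    using Cons assms(1) by (simp add: x sum.delta)
qed simp

lemma wbr_witt_of_list: "wbr (witt_of_list xs) (witt_of_list ys) = witt_of_list (bracket_list xs ys)"
proof
  fix n
  have "wbr (witt_of_list xs) (witt_of_list ys) n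
      = (\<Sum>a\<in>fst ` set xs. witt_of_list xs a * (of_int (a - (n - a)) * witt_of_list ys (n - a)))"
    by (simp add: wbr_eq_sum[OF _ supp_witt_of_list] ac_simps)
  also have "\<dots> = sum_list (map (\<lambda>(k, c). c * (of_int (k - (n - k)) * witt_of_list ys (n - k))) xs)"
    by (rule sum_witt_of_list) auto
  also have "\<dots> = witt_of_list (bracket_list xs ys) n"
  proof (induction xs)
    case (Cons x xs)
    obtain k c where x: "x = (k, c)"
      by fastforce
    have "c * (of_int (k - (n - k)) * witt_of_list ys (n - k))
        = witt_of_list (map (\<lambda>(l, d). (k + l, of_int (k - l) * c * d)) ys) n"
      by (induction ys) (auto simp: algebra_simps)
    then show ?case
      using Cons by (simp add: x bracket_list_def)
  qed (simp add: bracket_list_def)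
  finally show "wbr (witt_of_list xs) (witt_of_list ys) n = witt_of_list (bracket_list xs ys) n" .
qed

definition Olist :: "'k::field \<Rightarrow> (nat \<times> 'k) list \<Rightarrow> (int \<times> 'k) list" where
  "Olist lam ps = concat (map (\<lambda>(n, c). [(int n, c), (- int n, - (lam ^ n) * c)]) ps)"

lemma witt_of_list_Olist_mem_Osub:
  assumes "\<forall>p\<in>set ps. fst p \<ge> 1"
  shows "witt_of_list (Olist lam ps) \<in> Osub lam"
proof (rule Osub_memI)
  show "finite (supp (witt_of_list (Olist lam ps)))"
    by (rule finite_subset[OF supp_witt_of_list]) simp
  show "witt_of_list (Olist lam ps) 0 = 0"
    using assms by (induction ps) (auto simp: Olist_def)
  show "witt_of_list (Olist lam ps) (- int k) = - (lam ^ k) * witt_of_list (Olist lam ps) (int k)"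
    if "k \<ge> 1" for k
    using assms that by (induction ps) (auto simp: Olist_def algebra_simps)
qed

lemma ad_sq_relation_Osub_minus_one: "ad_sq_relation 64 (Osub (-1 :: 'k::field_char_0))"
proof -
  let ?x = "witt_of_list (Olist (-1 :: 'k) [(1, 1)])"
  let ?y = "witt_of_list (Olist (-1 :: 'k) [(5, 1), (3, 5), (1, 10)])"
  let ?q = "witt_of_list (Olist (-1 :: 'k) [(3, 15/8), (1, - 15/8)])"
  let ?s = "witt_of_list (Olist (-1 :: 'k) [(2, 5/16)])"
  have mem: "?x \<in> Osub (-1)" "?y \<in> Osub (-1)" "?q \<in> Osub (-1)" "?s \<in> Osub (-1)"
    by (rule witt_of_list_Olist_mem_Osub; simp)+
  have "?y \<noteq> (\<lambda>n. 0)"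
  proof
    assume "?y = (\<lambda>n. 0)"
    then have "?y 5 = 0"
      by simp
    then show False
      by (simp add: Olist_def)
  qed
  moreover have "wadd (wbr ?x (wbr ?x ?y)) (wsmult 64 ?y)
      = wadd (wbr ?y (wbr ?x ?q)) (wbr (wbr ?x ?y) (wbr ?x ?s))"
    unfolding wbr_witt_of_list wsmult_witt_of_list wadd_witt_of_list
    by (rule witt_of_list_eqI) (simp add: Olist_def bracket_list_def)
  ultimately show ?thesis
    unfolding ad_sq_relation_def using mem by blast
qed

theorem corollary4p23:
  shows "(\<forall>lam :: 'k :: field_char_0. alg_closed_field TYPE('k) \<longrightarrow> lam \<noteq> 0 \<longrightarrow>
            lie_iso (Osub lam) (Osub 1))
       \<and> (\<forall>lam :: real. lam > 0 \<longrightarrow> lie_iso (Osub lam) (Osub 1))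
       \<and> (\<forall>lam :: real. lam < 0 \<longrightarrow> lie_iso (Osub lam) (Osub (-1)))
       \<and> \<not> lie_iso (Osub (-1 :: real)) (Osub 1)"
proof (intro conjI allI impI)
  fix lam :: "'k :: field_char_0"
  assume "alg_closed_field TYPE('k)" and "lam \<noteq> 0"
  moreover obtain t :: 'k where "t\<^sup>2 = lam"
    using alg_closed_field_sqrt \<open>alg_closed_field TYPE('k)\<close> by blast
  ultimately show "lie_iso (Osub lam) (Osub 1)"
    using lie_iso_Osub_scale[of t 1] by auto
next
  fix lam :: real
  assume "lam > 0"
  then show "lie_iso (Osub lam) (Osub 1)"
    using lie_iso_Osub_scale[of "sqrt lam" 1] by simp
next
  fix lam :: real
  assume "lam < 0"
  then show "lie_iso (Osub lam) (Osub (-1))"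
    using lie_iso_Osub_scale[of "sqrt (- lam)" "-1"] by simp
next
  show "\<not> lie_iso (Osub (-1 :: real)) (Osub 1)"
    using ad_sq_relation_lie_iso[OF lie_subalgebra_Osub _ ad_sq_relation_Osub_minus_one]
      not_ad_sq_relation_Osub_one[of "64 :: real"] by auto
qed

end
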